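(* Let $d\ge1$, put $r=\lfloor (d-1)/2\rfloor$, and let $N=-1$ if $d$ is even and $N=r$ if $d$ is odd. Then the numbers $h^{(d)}_{i,j}$ increase weakly along the following chain: for each $0\le i\le r$, $h^{(d)}_{i,d}\le h^{(d)}_{i,d-1}\le\cdots\le h^{(d)}_{i,-1}$ (for $i<r$), and $h^{(d)}_{i,-1}\le h^{(d)}_{i+1,d}$ for $0\le i<r$, while the last segment is $h^{(d)}_{r,d}\le h^{(d)}_{r,d-1}\le\cdots\le h^{(d)}_{r,N}$. That is, $$h^{(d)}_{0,d}\le\cdots\le h^{(d)}_{0,-1}\le h^{(d)}_{1,d}\le\cdots\le h^{(d)}_{1,-1}\le\cdots\le h^{(d)}_{r,d}\le\cdots\le h^{(d)}_{r,N}.$$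
   Context: For $m\ge1$ and a permutation $\sigma$ of $[m]=\{1,\dots,m\}$, $\mathrm{des}(\sigma)$ is the number of $1\le t\le m-1$ with $\sigma(t)>\sigma(t+1)$; $A(m,i,j)$ is the number of permutations $\sigma$ of $[m]$ with $\mathrm{des}(\sigma)=i$ and $\sigma(1)=j$ (and $A(m,i,j)=0$ if $i<0$). For $d\ge0$ and $-1\le i,j\le d$ define $h^{(d)}_{i,j}=A(d+2,i+1,j+2)$. *)

theory Defs
  imports "HOL-Combinatorics.Permutations"
begin

definition des :: "nat \<Rightarrow> (nat \<Rightarrow> nat) \<Rightarrow> nat" where
  "des m \<sigma> = card {t \<in> {1..<m}. \<sigma> t > \<sigma> (Suc t)}"

definition A :: "nat \<Rightarrow> int \<Rightarrow> int \<Rightarrow> nat" where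
  "A m i j = (if i < 0 then 0 else
     card {\<sigma>. \<sigma> permutes {1..m} \<and> int (des m \<sigma>) = i \<and> int (\<sigma> 1) = j})"

definition h :: "nat \<Rightarrow> int \<Rightarrow> int \<Rightarrow> nat" where
  "h d i j = A (d + 2) (i + 1) (j + 2)"

end

theory Submission
  imports Defs
begin

text \<open>
  Deleting the first letter \<open>f\<close> of a permutation of \<open>[n+1]\<close> and standardizing the remaining
  word gives a permutation \<open>\<tau>\<close> of \<open>[n]\<close>, and position 1 is a descent exactly when \<open>\<tau>(1) < f\<close>.
  Hence \<open>A(n+1,i,f) = (\<Sum>g<f. A(n,i-1,g)) + (\<Sum>g\<ge>f. A(n,i,g))\<close>, which gives
  \<open>A(n+1,k,1) = A(n+1,k+1,n+1)\<close> (the links between consecutive rows of the chain) and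
  \<open>A(n+1,k,f) - A(n+1,k,f+1) = D(n,k,f)\<close>, where \<open>D(n,k,f) = A(n,k,f) - A(n,k-1,f)\<close>.
  So monotonicity along a row amounts to \<open>D(n,k,f) \<ge> 0\<close> whenever \<open>2k < n\<close>, or \<open>2k = n\<close> and
  \<open>2f > n\<close>. This follows by induction on \<open>n\<close> from the same recurrence and the complement
  symmetry \<open>A(n,k,f) = A(n,n-1-k,n+1-f)\<close>: the symmetry makes \<open>D(n,k,\<cdot>)\<close> antisymmetric
  under \<open>f \<mapsto> n+1-f\<close> when \<open>2k = n\<close>, and turns the sum over \<open>g \<ge> f\<close> into one over
  \<open>g \<le> n+1-f\<close> when \<open>2k = n+1\<close>.
\<close>

definition squeeze :: "nat \<Rightarrow> nat \<Rightarrow> nat" where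
  "squeeze f x = (if x < f then x else x - 1)"

definition unsqueeze :: "nat \<Rightarrow> nat \<Rightarrow> nat" where
  "unsqueeze f y = (if y < f then y else Suc y)"

lemma squeeze_less_squeeze_iff: "x \<noteq> f \<Longrightarrow> y \<noteq> f \<Longrightarrow> squeeze f x < squeeze f y \<longleftrightarrow> x < y"
  by (auto simp: squeeze_def)

lemma squeeze_unsqueeze [simp]: "squeeze f (unsqueeze f y) = y"
  by (simp add: squeeze_def unsqueeze_def)

lemma unsqueeze_squeeze: "x \<noteq> f \<Longrightarrow> unsqueeze f (squeeze f x) = x"
  by (auto simp: squeeze_def unsqueeze_def)

lemma unsqueeze_neq [simp]: "unsqueeze f y \<noteq> f"
  by (simp add: unsqueeze_def)

definition std_tail :: "nat \<Rightarrow> nat \<Rightarrow> (nat \<Rightarrow> nat) \<Rightarrow> nat \<Rightarrow> nat" where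
  "std_tail n f \<sigma> = (\<lambda>t. if t \<in> {1..n} then squeeze f (\<sigma> (Suc t)) else t)"

definition prepend :: "nat \<Rightarrow> nat \<Rightarrow> (nat \<Rightarrow> nat) \<Rightarrow> nat \<Rightarrow> nat" where
  "prepend n f \<tau> = (\<lambda>x. if x = 1 then f else if x \<in> {2..Suc n} then unsqueeze f (\<tau> (x - 1)) else x)"

lemma permutes_first_neq:
  assumes "\<sigma> permutes S" "x \<noteq> 1"
  shows "\<sigma> x \<noteq> \<sigma> 1"
  using permutes_inj[OF assms(1)] assms(2) by (auto dest: injD)

lemma squeeze_mem: "x \<in> {1..Suc n} \<Longrightarrow> f \<in> {1..Suc n} \<Longrightarrow> x \<noteq> f \<Longrightarrow> squeeze f x \<in> {1..n}"
  by (auto simp: squeeze_def)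

lemma unsqueeze_mem: "y \<in> {1..n} \<Longrightarrow> f \<in> {1..Suc n} \<Longrightarrow> unsqueeze f y \<in> {1..Suc n}"
  by (auto simp: unsqueeze_def)

lemma std_tail_permutes:
  assumes \<sigma>: "\<sigma> permutes {1..Suc n}" and f: "\<sigma> 1 = f"
  shows "std_tail n f \<sigma> permutes {1..n}"
proof (rule bij_imp_permutes)
  let ?\<tau> = "std_tail n f \<sigma>"
  have ne: "\<sigma> (Suc t) \<noteq> f" if "t \<in> {1..n}" for t
    using permutes_first_neq[OF \<sigma>, of "Suc t"] f that by simp
  have mem: "\<sigma> x \<in> {1..Suc n}" if "x \<in> {1..Suc n}" for x
    using permutes_in_image[OF \<sigma>] that by blast
  have into: "?\<tau> ` {1..n} \<subseteq> {1..n}"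
  proof
    fix y assume "y \<in> ?\<tau> ` {1..n}"
    then obtain t where t: "t \<in> {1..n}" and y: "y = squeeze f (\<sigma> (Suc t))"
      by (auto simp: std_tail_def)
    have "\<sigma> (Suc t) \<in> {1..Suc n}" "f \<in> {1..Suc n}"
      using mem[of "Suc t"] mem[of 1] t f by auto
    then show "y \<in> {1..n}"
      using squeeze_mem ne[OF t] y by blast
  qed
  have "inj_on ?\<tau> {1..n}"
  proof (rule inj_onI)
    fix s t assume s: "s \<in> {1..n}" and t: "t \<in> {1..n}" and eq: "?\<tau> s = ?\<tau> t"
    then have "squeeze f (\<sigma> (Suc s)) = squeeze f (\<sigma> (Suc t))"
      by (simp add: std_tail_def)
    then have "\<sigma> (Suc s) = \<sigma> (Suc t)"
      by (metis ne[OF s] ne[OF t] unsqueeze_squeeze)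
    then show "s = t"
      using permutes_inj[OF \<sigma>] by (simp add: inj_eq)
  qed
  then show "bij_betw ?\<tau> {1..n} {1..n}"
    using endo_inj_surj[OF _ into] by (simp add: bij_betw_def)
  show "x \<notin> {1..n} \<Longrightarrow> ?\<tau> x = x" for x
    by (auto simp: std_tail_def)
qed

lemma prepend_permutes:
  assumes \<tau>: "\<tau> permutes {1..n}" and f: "f \<in> {1..Suc n}"
  shows "prepend n f \<tau> permutes {1..Suc n}"
proof (rule bij_imp_permutes)
  let ?\<sigma> = "prepend n f \<tau>"
  have into: "?\<sigma> ` {1..Suc n} \<subseteq> {1..Suc n}"
  proof
    fix y assume "y \<in> ?\<sigma> ` {1..Suc n}"
    then obtain x where x: "x \<in> {1..Suc n}" and y: "y = ?\<sigma> x"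
      by blast
    show "y \<in> {1..Suc n}"
    proof (cases "x = 1")
      case True
      with f y show ?thesis by (simp add: prepend_def)
    next
      case False
      with x have "x - 1 \<in> {1..n}"
        by auto
      then have "\<tau> (x - 1) \<in> {1..n}"
        using permutes_in_image[OF \<tau>] by blast
      with x f have "unsqueeze f (\<tau> (x - 1)) \<in> {1..Suc n}"
        by (rule_tac unsqueeze_mem) auto
      with False x y show ?thesis
        by (simp add: prepend_def)
    qed
  qed
  have "inj_on ?\<sigma> {1..Suc n}"
  proof (rule inj_onI)
    fix x y assume x: "x \<in> {1..Suc n}" and y: "y \<in> {1..Suc n}" and eq: "?\<sigma> x = ?\<sigma> y"
    show "x = y"
    proof (cases "x = 1 \<or> y = 1")
      case True
      with x y eq show ?thesis
        by (auto simp: prepend_def unsqueeze_neq[THEN not_sym] split: if_splits)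
    next
      case False
      with x y eq have "\<tau> (x - 1) = \<tau> (y - 1)"
        by (simp add: prepend_def) (metis squeeze_unsqueeze)
      with False x y show ?thesis by (auto simp: permutes_inj[OF \<tau>, THEN inj_eq])
    qed
  qed
  with into show "bij_betw ?\<sigma> {1..Suc n} {1..Suc n}"
    using endo_inj_surj[OF _ into] by (simp add: bij_betw_def)
  show "x \<notin> {1..Suc n} \<Longrightarrow> ?\<sigma> x = x" for x
    by (auto simp: prepend_def)
qed

lemma std_tail_prepend:
  assumes "\<tau> permutes {1..n}"
  shows "std_tail n f (prepend n f \<tau>) = \<tau>"
  using permutes_not_in[OF assms] by (auto simp: fun_eq_iff std_tail_def prepend_def)

lemma prepend_std_tail:
  assumes \<sigma>: "\<sigma> permutes {1..Suc n}" and f: "\<sigma> 1 = f"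
  shows "prepend n f (std_tail n f \<sigma>) = \<sigma>"
proof
  fix x
  show "prepend n f (std_tail n f \<sigma>) x = \<sigma> x"
    using permutes_first_neq[OF \<sigma>, of x] permutes_not_in[OF \<sigma>, of x] f
    by (auto simp: prepend_def std_tail_def unsqueeze_squeeze)
qed

lemma des_eq_sum: "des m \<sigma> = (\<Sum>t\<in>{1..<m}. if \<sigma> (Suc t) < \<sigma> t then 1 else 0)"
  unfolding des_def card_eq_sum by (rule sum.inter_filter) simp

lemma des_std_tail:
  assumes \<sigma>: "\<sigma> permutes {1..Suc n}" and f: "\<sigma> 1 = f" and n: "1 \<le> n"
  defines "\<tau> \<equiv> std_tail n f \<sigma>"
  shows "des (Suc n) \<sigma> = des n \<tau> + (if \<tau> 1 < f then 1 else 0)"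
proof -
  have step: "\<sigma> (Suc (Suc t)) < \<sigma> (Suc t) \<longleftrightarrow> \<tau> (Suc t) < \<tau> t" if "t \<in> {1..<n}" for t
    using that squeeze_less_squeeze_iff permutes_first_neq[OF \<sigma>] f by (simp add: \<tau>_def std_tail_def)
  have first: "\<sigma> 2 < \<sigma> 1 \<longleftrightarrow> \<tau> 1 < f"
    using n f permutes_first_neq[OF \<sigma>, of 2] by (auto simp: \<tau>_def std_tail_def squeeze_def numeral_2_eq_2)
  have "des (Suc n) \<sigma> = (if \<sigma> 2 < \<sigma> 1 then 1 else 0)
      + (\<Sum>t\<in>{1..<n}. if \<sigma> (Suc (Suc t)) < \<sigma> (Suc t) then 1 else 0)"
    unfolding des_eq_sum sum.atLeast_Suc_lessThan[of 1 "Suc n", OF le_imp_less_Suc[OF n]]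
      sum.shift_bounds_Suc_ivl numeral_2_eq_2 by simp
  also have "\<dots> = (if \<tau> 1 < f then 1 else 0) + des n \<tau>"
    using step first by (simp add: des_eq_sum)
  finally show ?thesis by simp
qed

lemma bij_betw_std_tail:
  assumes "f \<in> {1..Suc n}"
  shows "bij_betw (std_tail n f) {\<sigma>. \<sigma> permutes {1..Suc n} \<and> \<sigma> 1 = f} {\<tau>. \<tau> permutes {1..n}}"
proof (rule bij_betw_byWitness[where f'="prepend n f"])
  show "\<forall>\<sigma>\<in>{\<sigma>. \<sigma> permutes {1..Suc n} \<and> \<sigma> 1 = f}. prepend n f (std_tail n f \<sigma>) = \<sigma>"
    using prepend_std_tail by blast
  show "\<forall>\<tau>\<in>{\<tau>. \<tau> permutes {1..n}}. std_tail n f (prepend n f \<tau>) = \<tau>"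
    using std_tail_prepend by blast
  show "std_tail n f ` {\<sigma>. \<sigma> permutes {1..Suc n} \<and> \<sigma> 1 = f} \<subseteq> {\<tau>. \<tau> permutes {1..n}}"
    using std_tail_permutes by blast
  show "prepend n f ` {\<tau>. \<tau> permutes {1..n}} \<subseteq> {\<sigma>. \<sigma> permutes {1..Suc n} \<and> \<sigma> 1 = f}"
    using prepend_permutes assms by (auto simp: prepend_def)
qed

lemma A_eq_card: "A m k (int j) = card {\<sigma>. \<sigma> permutes {1..m} \<and> int (des m \<sigma>) = k \<and> \<sigma> 1 = j}"
  by (auto simp: A_def)

lemma A_Suc:
  assumes n: "1 \<le> n" and f: "f \<in> {1..Suc n}"
  shows "A (Suc n) i (int f) = (\<Sum>g\<in>{1..<f}. A n (i - 1) (int g)) + (\<Sum>g\<in>{f..n}. A n i (int g))"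
proof -
  define c where "c \<tau> = int (des n \<tau>) + (if \<tau> 1 < f then 1 else 0)" for \<tau>
  define T where "T = {\<tau> \<in> {\<tau>. \<tau> permutes {1..n}}. c \<tau> = i}"
  have fin: "finite T"
    unfolding T_def by (rule finite_subset[OF _ finite_permutations[of "{1..n}"]]) auto
  have first: "\<tau> 1 \<in> {1..n}" if "\<tau> \<in> T" for \<tau>
    using that n permutes_in_image[of \<tau> "{1..n}" 1] by (simp add: T_def)
  have "A (Suc n) i (int f)
      = card {\<sigma> \<in> {\<sigma>. \<sigma> permutes {1..Suc n} \<and> \<sigma> 1 = f}. int (des (Suc n) \<sigma>) = i}"
    by (auto simp: A_eq_card intro!: arg_cong[where f = card])
  also have "\<dots> = card T"
    unfolding T_def
    by (rule bij_betw_same_card, rule bij_betw_Collect[OF bij_betw_std_tail[OF f]])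
      (auto simp: c_def des_std_tail[OF _ _ n])
  also have "\<dots> = (\<Sum>g\<in>{1..n}. card {\<tau> \<in> T. \<tau> 1 = g})"
    unfolding card_eq_sum using fin first by (intro sum.group[symmetric]) auto
  also have "\<dots> = (\<Sum>g\<in>{1..n}. A n (i - (if g < f then 1 else 0)) (int g))"
    by (intro sum.cong refl) (auto simp: A_eq_card T_def c_def intro!: arg_cong[where f = card])
  also have "\<dots> = (\<Sum>g\<in>{1..<f}. A n (i - (if g < f then 1 else 0)) (int g))
      + (\<Sum>g\<in>{f..n}. A n (i - (if g < f then 1 else 0)) (int g))"
    using f by (subst sum.union_disjoint[symmetric]) (auto intro!: sum.cong)
  also have "\<dots> = (\<Sum>g\<in>{1..<f}. A n (i - 1) (int g)) + (\<Sum>g\<in>{f..n}. A n i (int g))"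
    by (intro arg_cong2[where f = "(+)"] sum.cong) auto
  finally show ?thesis .
qed

lemma A_Suc_first_one:
  assumes "1 \<le> n"
  shows "A (Suc n) k 1 = A (Suc n) (k + 1) (int (Suc n))"
  using A_Suc[OF assms, of 1 k] A_Suc[OF assms, of "Suc n" "k + 1"]
  by (simp add: atLeastLessThanSuc_atLeastAtMost)

lemma sum_reflect:
  fixes \<phi> :: "nat \<Rightarrow> 'a::comm_monoid_add"
  assumes "a \<le> c" "b \<le> c"
  shows "(\<Sum>g\<in>{a..b}. \<phi> (c - g)) = (\<Sum>g\<in>{c - b..c - a}. \<phi> g)"
  by (rule sum.reindex_bij_witness[where i = "\<lambda>g. c - g" and j = "\<lambda>g. c - g"]) (use assms in auto)

lemma A_complement:
  assumes "1 \<le> m" "f \<in> {1..m}"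
  shows "A m i (int f) = A m (int m - 1 - i) (int (m + 1 - f))"
  using assms
proof (induction m arbitrary: i f rule: nat_induct_at_least)
  case base
  then show ?case by (auto simp: A_def des_def)
next
  case (Suc n)
  have upper: "(\<Sum>g\<in>{f..n}. A n i (int g)) = (\<Sum>g\<in>{1..n + 1 - f}. A n (int n - 1 - i) (int g))"
  proof -
    have "(\<Sum>g\<in>{f..n}. A n i (int g)) = (\<Sum>g\<in>{f..n}. A n (int n - 1 - i) (int (n + 1 - g)))"
      using Suc.prems by (intro sum.cong refl Suc.IH) auto
    also have "\<dots> = (\<Sum>g\<in>{1..n + 1 - f}. A n (int n - 1 - i) (int g))"
      using Suc.prems sum_reflect[of f "n + 1" n "\<lambda>g. A n (int n - 1 - i) (int g)"] by simp
    finally show ?thesis .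
  qed
  have lower: "(\<Sum>g\<in>{1..<f}. A n (i - 1) (int g)) = (\<Sum>g\<in>{n + 2 - f..n}. A n (int n - i) (int g))"
  proof -
    have "(\<Sum>g\<in>{1..<f}. A n (i - 1) (int g)) = (\<Sum>g\<in>{1..f - 1}. A n (int n - i) (int (n + 1 - g)))"
      using Suc.prems Suc.IH[of _ "i - 1"] by (intro sum.cong) (auto simp: algebra_simps)
    also have "\<dots> = (\<Sum>g\<in>{n + 2 - f..n}. A n (int n - i) (int g))"
    proof -
      have "n + 1 - (f - 1) = n + 2 - f" "1 \<le> n + 1" "f - 1 \<le> n + 1"
        using Suc.prems by auto
      then show ?thesis
        using sum_reflect[of 1 "n + 1" "f - 1" "\<lambda>g. A n (int n - i) (int g)"] by simp
    qed
    finally show ?thesis .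
  qed
  have "A (Suc n) (int (Suc n) - 1 - i) (int (Suc n + 1 - f))
      = (\<Sum>g\<in>{1..n + 1 - f}. A n (int n - 1 - i) (int g)) + (\<Sum>g\<in>{n + 2 - f..n}. A n (int n - i) (int g))"
    using A_Suc[OF Suc.hyps(1), of "Suc n + 1 - f" "int (Suc n) - 1 - i"] Suc.prems
    by (auto simp: atLeastLessThanSuc_atLeastAtMost Suc_diff_le algebra_simps)
  then show ?case
    using A_Suc[OF Suc.hyps(1), of f i] Suc.prems upper lower by simp
qed

definition A_des_diff :: "nat \<Rightarrow> int \<Rightarrow> nat \<Rightarrow> int" where
  "A_des_diff m k f = int (A m k (int f)) - int (A m (k - 1) (int f))"

lemma A_des_diff_Suc:
  assumes "1 \<le> n" "f \<in> {1..Suc n}"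
  shows "A_des_diff (Suc n) k f
    = (\<Sum>g\<in>{1..<f}. A_des_diff n (k - 1) g) + (\<Sum>g\<in>{f..n}. A_des_diff n k g)"
  using A_Suc[OF assms, of k] A_Suc[OF assms, of "k - 1"]
  by (simp add: A_des_diff_def sum_subtractf)

lemma A_des_diff_complement:
  assumes "1 \<le> n" "g \<in> {1..n}"
  shows "A_des_diff n k g = - A_des_diff n (int n - k) (n + 1 - g)"
  using A_complement[OF assms, of k] A_complement[OF assms, of "k - 1"]
  by (simp add: A_des_diff_def algebra_simps)

lemma A_Suc_first_diff:
  assumes "1 \<le> n" "f \<in> {1..n}"
  shows "int (A (Suc n) k (int f)) - int (A (Suc n) k (int (Suc f))) = A_des_diff n k f"
proof -
  have "A (Suc n) k (int f)
      = (\<Sum>g\<in>{1..<f}. A n (k - 1) (int g)) + (A n k (int f) + (\<Sum>g\<in>{Suc f..n}. A n k (int g)))"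
    using A_Suc[OF assms(1), of f k] assms(2) by (simp add: sum.atLeast_Suc_atMost)
  moreover have "A (Suc n) k (int (Suc f))
      = ((\<Sum>g\<in>{1..<f}. A n (k - 1) (int g)) + A n (k - 1) (int f)) + (\<Sum>g\<in>{Suc f..n}. A n k (int g))"
    using A_Suc[OF assms(1), of "Suc f" k] assms(2) by (simp add: sum.atLeastLessThan_Suc)
  ultimately show ?thesis
    by (simp add: A_des_diff_def)
qed

lemma sum_tail_nonneg_if_antisymmetric:
  fixes \<phi> :: "nat \<Rightarrow> 'a::linordered_ab_group_add"
  assumes anti: "\<And>g. g \<in> {1..n} \<Longrightarrow> \<phi> (n + 1 - g) = - \<phi> g"
    and upper: "\<And>g. g \<in> {1..n} \<Longrightarrow> n < 2 * g \<Longrightarrow> 0 \<le> \<phi> g"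
    and f: "1 \<le> f"
  shows "0 \<le> (\<Sum>g\<in>{f..n}. \<phi> g)"
proof (cases "n < 2 * f")
  case True
  then show ?thesis using upper f by (intro sum_nonneg) auto
next
  case False
  have "(\<Sum>g\<in>{f..n + 1 - f}. \<phi> g) = (\<Sum>g\<in>{f..n + 1 - f}. \<phi> (n + 1 - g))"
    using sum_reflect[of f "n + 1" "n + 1 - f" \<phi>] False by simp
  also have "\<dots> = - (\<Sum>g\<in>{f..n + 1 - f}. \<phi> g)"
    using anti f False by (simp add: sum_negf[symmetric]) (intro sum.cong; auto)
  finally have middle: "(\<Sum>g\<in>{f..n + 1 - f}. \<phi> g) = 0"
    using equal_neg_zero by blast
  have "{f..n} = {f..n + 1 - f} \<union> {n + 2 - f..n}"
    using False f by auto
  then have "(\<Sum>g\<in>{f..n}. \<phi> g) = (\<Sum>g\<in>{n + 2 - f..n}. \<phi> g)"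
    using middle by (simp add: sum.union_disjoint)
  also have "\<dots> \<ge> 0"
    using upper False f by (intro sum_nonneg) auto
  finally show ?thesis .
qed

lemma A_des_diff_nonneg:
  assumes "1 \<le> m" "f \<in> {1..m}" "2 * k < int m \<or> (2 * k = int m \<and> m < 2 * f)"
  shows "0 \<le> A_des_diff m k f"
  using assms
proof (induction m arbitrary: k f rule: nat_induct_at_least)
  case base
  then show ?case by (auto simp: A_des_diff_def A_def des_def)
next
  case (Suc n)
  have f: "f \<in> {1..Suc n}" using Suc.prems(1) .
  have lower: "0 \<le> (\<Sum>g\<in>{1..<f}. A_des_diff n (k - 1) g)" if "2 * k \<le> int n + 1"
    using Suc.IH f that by (intro sum_nonneg) auto
  show ?case
  proof (cases "2 * k \<le> int n")
    case True
    have "0 \<le> (\<Sum>g\<in>{f..n}. A_des_diff n k g)"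
    proof (cases "2 * k < int n")
      case True
      then show ?thesis using Suc.IH f by (intro sum_nonneg) auto
    next
      case False
      with \<open>2 * k \<le> int n\<close> have "int n - k = k" by simp
      then show ?thesis
        using A_des_diff_complement[OF Suc.hyps(1)] Suc.IH f
        by (intro sum_tail_nonneg_if_antisymmetric) force+
    qed
    then show ?thesis
      using A_des_diff_Suc[OF Suc.hyps(1) f] lower True by simp
  next
    case False
    with Suc.prems(2) have k: "2 * k = int n + 1" and f_big: "n + 1 < 2 * f" by auto
    have "int n - k = k - 1" using k by simp
    then have "A_des_diff n k g = - A_des_diff n (k - 1) (n + 1 - g)" if "g \<in> {f..n}" for g
      using A_des_diff_complement[OF Suc.hyps(1), of g k] f that by simp
    then have "(\<Sum>g\<in>{f..n}. A_des_diff n k g) = - (\<Sum>g\<in>{f..n}. A_des_diff n (k - 1) (n + 1 - g))"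
      by (simp add: sum_negf[symmetric])
    also have "\<dots> = - (\<Sum>g\<in>{1..n + 1 - f}. A_des_diff n (k - 1) g)"
      using f sum_reflect[of f "n + 1" n "A_des_diff n (k - 1)"] by simp
    finally have upper:
      "(\<Sum>g\<in>{f..n}. A_des_diff n k g) = - (\<Sum>g\<in>{1..n + 1 - f}. A_des_diff n (k - 1) g)" .
    have "(\<Sum>g\<in>{1..n + 1 - f}. A_des_diff n (k - 1) g) \<le> (\<Sum>g\<in>{1..<f}. A_des_diff n (k - 1) g)"
      using Suc.IH k f f_big by (intro sum_mono2) auto
    then show ?thesis
      using A_des_diff_Suc[OF Suc.hyps(1) f] upper by simp
  qed
qed

theorem lemma2p10:
  fixes d :: nat
  assumes "d \<ge> 1"
  defines "r \<equiv> (int d - 1) div 2"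
  defines "N \<equiv> (if even d then -1 else r)"
  shows "(\<forall>i j. 0 \<le> i \<and> i \<le> r \<and> (if i < r then -1 else N) \<le> j \<and> j < int d
              \<longrightarrow> h d i (j + 1) \<le> h d i j)
       \<and> (\<forall>i. 0 \<le> i \<and> i < r \<longrightarrow> h d i (-1) \<le> h d (i + 1) (int d))"
proof (intro conjI allI impI)
  fix i j
  assume ij: "0 \<le> i \<and> i \<le> r \<and> (if i < r then -1 else N) \<le> j \<and> j < int d"
  define f where "f = nat (j + 2)"
  have "-1 \<le> j"
    using ij by (auto simp: N_def r_def split: if_splits)
  then have fj: "int f = j + 2" and f: "f \<in> {1..d + 1}"
    using ij by (auto simp: f_def)
  have "2 * (i + 1) < int (d + 1) \<or> (2 * (i + 1) = int (d + 1) \<and> d + 1 < 2 * f)"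
  proof (cases "i < r")
    case True
    then show ?thesis unfolding r_def by presburger
  next
    case False
    with ij have "i = r" "even d \<or> r \<le> j"
      by (auto simp: N_def split: if_splits)
    then show ?thesis
      using fj unfolding r_def by presburger
  qed
  then have "0 \<le> A_des_diff (d + 1) (i + 1) f"
    using A_des_diff_nonneg f by simp
  moreover have "h d i j = A (Suc (d + 1)) (i + 1) (int f)"
    and "h d i (j + 1) = A (Suc (d + 1)) (i + 1) (int (Suc f))"
    using fj by (simp_all add: h_def algebra_simps)
  ultimately show "h d i (j + 1) \<le> h d i j"
    using A_Suc_first_diff[of "d + 1" f "i + 1"] f by simp
next
  fix i
  have "h d i (-1) = A (Suc (d + 1)) (i + 1) 1"
    by (simp add: h_def)
  also have "\<dots> = h d (i + 1) (int d)"
    using A_Suc_first_one[of "d + 1" "i + 1"] by (simp add: h_def algebra_simps)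
  finally show "h d i (-1) \<le> h d (i + 1) (int d)"
    by simp
qed

end
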